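(* Let $y\in\mathbb{R}^d$, $\lambda>0$, and $X=[x_1,\cdots,x_n]\in\mathbb{R}^{d\times n}$. Let $w^*=[w_1^*,\cdots,w_n^*]^T\in\mathbb{R}^n$ be the optimal solution to $$\min_{w\in\mathbb{R}^n}\ \tfrac{1}{2}\|y-Xw\|_2^2+\lambda\|X\,\mathrm{Diag}(w)\|_*.$$ If $x_i\rightarrow x_j$ (with $y$, $\lambda$ and the other columns of $X$ fixed), then $w_i^*\rightarrow w_j^*$, i.e., $w_i^*-w_j^*\to 0$.
   Context: $\mathrm{Diag}(w)$ is the diagonal matrix with diagonal $w$, and $\|\cdot\|_*$ is the nuclear norm (sum of singular values). *)

theory Defs
  imports Complex_Main "Jordan_Normal_Form.Char_Poly"
begin

definition Diag :: "real vec \<Rightarrow> real mat" where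
  "Diag w = mat (dim_vec w) (dim_vec w) (\<lambda>(i,j). if i = j then w $ i else 0)"

text \<open>Eigenvalues (with multiplicity) of A^T A, i.e. the squared singular values of A.
  A^T A is real symmetric, so its characteristic polynomial splits over the reals.\<close>
definition sq_singular_values :: "real mat \<Rightarrow> real list" where
  "sq_singular_values A =
     (SOME es. char_poly (transpose_mat A * A) = (\<Prod>e\<leftarrow>es. [:- e, 1:]))"

definition nuclear_norm :: "real mat \<Rightarrow> real" where
  "nuclear_norm A = sum_list (map sqrt (sq_singular_values A))"

definition trace_lasso_obj :: "real vec \<Rightarrow> real \<Rightarrow> real mat \<Rightarrow> real vec \<Rightarrow> real" where
  "trace_lasso_obj y lam X w =
     1/2 * ((y - X *\<^sub>v w) \<bullet> (y - X *\<^sub>v w)) + lam * nuclear_norm (X * Diag w)"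

end

theory Submission
  imports Defs "Jordan_Normal_Form.Schur_Decomposition" "HOL-Analysis.L2_Norm"
begin

abbreviation vec_norm :: "real vec \<Rightarrow> real" where
  "vec_norm v \<equiv> sqrt (v \<bullet> v)"

lemma scalar_prod_self_nonneg [simp]: "0 \<le> (v :: real vec) \<bullet> v"
  using conjugate_square_ge_0_vec[of v] by simp

lemma scalar_prod_self_eq_0_iff: "(v :: real vec) \<in> carrier_vec n \<Longrightarrow> v \<bullet> v = 0 \<longleftrightarrow> v = 0\<^sub>v n"
  using conjugate_square_eq_0_vec[of v n] by simp

lemma scalar_prod_eq_sum:
  "v \<in> carrier_vec d \<Longrightarrow> w \<in> carrier_vec d \<Longrightarrow> v \<bullet> w = (\<Sum>r<d. v $ r * w $ r)"
  by (simp add: scalar_prod_def lessThan_atLeast0)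

lemma vec_norm_smult: "vec_norm (c \<cdot>\<^sub>v v) = \<bar>c\<bar> * vec_norm v"
proof -
  have "(c \<cdot>\<^sub>v v) \<bullet> (c \<cdot>\<^sub>v v) = c\<^sup>2 * (v \<bullet> v)"
    by (simp add: scalar_prod_def sum_distrib_left power2_eq_square mult_ac)
  thus ?thesis by (simp add: real_sqrt_mult)
qed

lemma abs_scalar_prod_le_vec_norm:
  fixes v w :: "real vec" assumes "v \<in> carrier_vec d" "w \<in> carrier_vec d"
  shows "\<bar>v \<bullet> w\<bar> \<le> vec_norm v * vec_norm w"
proof -
  have "\<bar>v \<bullet> w\<bar> \<le> (\<Sum>r<d. \<bar>v $ r\<bar> * \<bar>w $ r\<bar>)"
    unfolding scalar_prod_eq_sum[OF assms] by (rule order_trans[OF sum_abs]) (simp add: abs_mult)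
  also have "\<dots> \<le> L2_set (\<lambda>r. v $ r) {..<d} * L2_set (\<lambda>r. w $ r) {..<d}"
    by (rule L2_set_mult_ineq)
  also have "\<dots> = vec_norm v * vec_norm w"
    unfolding L2_set_def scalar_prod_eq_sum[OF assms(1,1)] scalar_prod_eq_sum[OF assms(2,2)]
    by (simp add: power2_eq_square)
  finally show ?thesis .
qed

lemma scalar_prod_le_vec_norm:
  "v \<in> carrier_vec d \<Longrightarrow> w \<in> carrier_vec d \<Longrightarrow> v \<bullet> w \<le> vec_norm v * vec_norm (w :: real vec)"
  using abs_scalar_prod_le_vec_norm by fastforce

lemma sum_mult_le_L2_set: "(\<Sum>i\<in>I. f i * g i) \<le> L2_set f I * L2_set g I"
  by (rule order_trans[OF _ L2_set_mult_ineq]) (auto intro!: sum_mono simp: abs_mult[symmetric])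

lemma sym_mat_has_real_eigenvalue:
  fixes M :: "real mat"
  assumes M: "M \<in> carrier_mat n n" and n: "n > 0" and sym: "transpose_mat M = M"
  shows "\<exists>e. eigenvalue M e"
proof -
  define Mc where "Mc = map_mat complex_of_real M"
  have Mc: "Mc \<in> carrier_mat n n" using M by (simp add: Mc_def)
  obtain as where as: "char_poly Mc = (\<Prod>a\<leftarrow>as. [:- a, 1:])" "length as = n"
    using char_poly_factorized[OF Mc] by blast
  then obtain z zs where "as = z # zs" using n by (cases as) auto
  hence root: "poly (char_poly Mc) z = 0" using as(1) by simp
  hence "eigenvalue Mc z" using eigenvalue_root_char_poly[OF Mc] by simp
  then obtain v where "eigenvector Mc v z" unfolding eigenvalue_def by blast
  hence v: "v \<in> carrier_vec n" "v \<noteq> 0\<^sub>v n" "Mc *\<^sub>v v = z \<cdot>\<^sub>v v"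
    unfolding eigenvector_def using Mc by auto
  text \<open>The Rayleigh quotient \<open>v\<^sup>* M v / v\<^sup>* v\<close> of the Hermitian matrix \<open>Mc\<close> equals \<open>z\<close> and is real.\<close>
  define s where "s = (\<Sum>a<n. \<Sum>b<n. cnj (v $ a) * Mc $$ (a,b) * v $ b)"
  define t where "t = (\<Sum>a<n. cnj (v $ a) * v $ a)"
  have "s = (\<Sum>a<n. cnj (v $ a) * (Mc *\<^sub>v v) $ a)"
    unfolding s_def using Mc v(1)
    by (auto simp: scalar_prod_def sum_distrib_left mult.assoc lessThan_atLeast0 intro!: sum.cong)
  also have "\<dots> = z * t" unfolding v(3) t_def using v
    by (auto simp: sum_distrib_left intro!: sum.cong)
  finally have szt: "s = z * t" .
  have "cnj s = (\<Sum>a<n. \<Sum>b<n. v $ a * Mc $$ (a,b) * cnj (v $ b))"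
    unfolding s_def using M by (simp add: Mc_def)
  also have "\<dots> = (\<Sum>b<n. \<Sum>a<n. v $ a * Mc $$ (a,b) * cnj (v $ b))"
    by (rule sum.swap)
  also have "\<dots> = s" unfolding s_def
  proof (intro sum.cong refl)
    fix b a assume ab: "b \<in> {..<n}" "a \<in> {..<n}"
    hence "M $$ (a,b) = M $$ (b,a)" using arg_cong[OF sym, of "\<lambda>A. A $$ (b,a)"] M by auto
    thus "v $ a * Mc $$ (a,b) * cnj (v $ b) = cnj (v $ b) * Mc $$ (b,a) * v $ a"
      using ab M by (simp add: Mc_def)
  qed
  finally have "cnj s = s" .
  hence Is: "Im s = 0" by (simp add: complex_eq_iff)
  have It: "Im t = 0" unfolding t_def by (simp add: Im_sum)
  obtain a where a: "a < n" "v $ a \<noteq> 0"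
    using v(1,2) by (metis carrier_vecD eq_vecI index_zero_vec(1,2))
  have "Re (cnj (v $ a) * v $ a) > 0" using a(2)
    by (simp add: complex_eq_iff sum_power2_gt_zero_iff power2_eq_square[symmetric])
  moreover have "Re (cnj (v $ a) * v $ a) \<le> Re t" unfolding t_def Re_sum
    by (rule member_le_sum) (use a in auto)
  ultimately have "Re t > 0" by linarith
  hence "Im z = 0" using szt Is It by (simp add: complex_eq_iff)
  hence zr: "z = complex_of_real (Re z)" by (simp add: complex_eq_iff)
  have "char_poly Mc = map_poly complex_of_real (char_poly M)"
    unfolding Mc_def by (rule of_real_hom.char_poly_hom[OF M])
  with root have "poly (char_poly M) (Re z) = 0" by (subst (asm) zr) simp
  thus ?thesis using eigenvalue_root_char_poly[OF M] by blast
qed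

lemma orthonormal_completion:
  fixes u :: "real vec"
  assumes u: "u \<in> carrier_vec n" and uu: "u \<bullet> u = 1"
  shows "\<exists>W \<in> carrier_mat n n. transpose_mat W * W = 1\<^sub>m n \<and> col W 0 = u"
proof -
  have u0: "u \<noteq> 0\<^sub>v n" using uu u by auto
  interpret cof_vec_space n "TYPE(real)" .
  define b where "b = basis_completion u"
  from basis_completion[OF u u0, folded b_def]
  have dist_b: "distinct b" and indep: "\<not> lin_dep (set b)" and bc: "set b \<subseteq> carrier_vec n"
    and hdb: "hd b = u" and len_b: "length b = n" by auto
  have n: "n > 0" using u0 u by (cases n) auto
  from hdb len_b n obtain vs where bv: "b = u # vs" by (cases b) auto
  define ws where "ws = gram_schmidt n b"
  from gram_schmidt_result[OF bc dist_b indep ws_def]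
  have ws: "set ws \<subseteq> carrier_vec n" "corthogonal ws" "length ws = n" by (auto simp: len_b)
  have hdws: "ws ! 0 = u" unfolding ws_def bv using u by (simp add: gram_schmidt_code)
  define W where "W = mat_of_cols n (map (\<lambda>w. (1 / vec_norm w) \<cdot>\<^sub>v w) ws)"
  have W: "W \<in> carrier_mat n n" unfolding W_def using ws by auto
  have colW: "col W a = (1 / vec_norm (ws ! a)) \<cdot>\<^sub>v (ws ! a)" if "a < n" for a
    unfolding W_def using that ws by (subst col_mat_of_cols) auto
  have wsa: "ws ! a \<in> carrier_vec n" if "a < n" for a using ws that by auto
  have ortho: "ws ! a \<bullet> ws ! b = 0 \<longleftrightarrow> a \<noteq> b" if "a < n" "b < n" for a b
    using corthogonalD[OF ws(2), of a b] that ws(3) by simp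
  have "transpose_mat W * W = 1\<^sub>m n"
  proof (rule eq_matI)
    fix a c assume "a < dim_row (1\<^sub>m n)" and "c < dim_col (1\<^sub>m n)"
    hence a: "a < n" and c: "c < n" by auto
    have "(transpose_mat W * W) $$ (a,c)
        = (1 / vec_norm (ws!a)) * (1 / vec_norm (ws!c)) * (ws ! a \<bullet> ws ! c)"
      using W a c colW wsa[OF a] wsa[OF c] by (simp add: row_transpose)
    also have "\<dots> = 1\<^sub>m n $$ (a,c)"
    proof (cases "a = c")
      case True
      have "ws!a \<bullet> ws!a > 0" using ortho[OF a a] scalar_prod_self_nonneg[of "ws!a"] by linarith
      thus ?thesis using True a by (simp add: field_simps real_sqrt_mult[symmetric])
    qed (use ortho[OF a c] a c in simp)
    finally show "(transpose_mat W * W) $$ (a,c) = 1\<^sub>m n $$ (a,c)" .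
  qed (use W in auto)
  moreover have "col W 0 = u" using colW[OF n] hdws uu by simp
  ultimately show ?thesis using W by blast
qed

lemma transpose_congruence_sym:
  fixes W M :: "real mat"
  assumes W: "W \<in> carrier_mat n k" and M: "M \<in> carrier_mat n n" and sym: "transpose_mat M = M"
  shows "transpose_mat (transpose_mat W * M * W) = transpose_mat W * M * W"
proof -
  have "transpose_mat (transpose_mat W * M * W) = transpose_mat (transpose_mat W * (M * W))"
    using W M by simp
  also have "\<dots> = transpose_mat (M * W) * W"
    using transpose_mult[of "transpose_mat W" k n "M * W" k] W M by simp
  also have "transpose_mat (M * W) = transpose_mat W * M"
    using transpose_mult[OF M W] sym by simp
  finally show ?thesis .
qed

lemma sym_mat_deflation:
  fixes M :: "real mat"
  assumes M: "M \<in> carrier_mat (Suc m) (Suc m)" and sym: "transpose_mat M = M"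
  shows "\<exists>W \<in> carrier_mat (Suc m) (Suc m). \<exists>e. \<exists>M' \<in> carrier_mat m m.
    transpose_mat W * W = 1\<^sub>m (Suc m) \<and> transpose_mat M' = M' \<and>
    transpose_mat W * M * W = four_block_mat (mat 1 1 (\<lambda>_. e)) (0\<^sub>m 1 m) (0\<^sub>m m 1) M'"
proof -
  obtain e where "eigenvalue M e" using sym_mat_has_real_eigenvalue[OF M _ sym] by auto
  then obtain v where "eigenvector M v e" unfolding eigenvalue_def by blast
  hence v: "v \<in> carrier_vec (Suc m)" "v \<noteq> 0\<^sub>v (Suc m)" "M *\<^sub>v v = e \<cdot>\<^sub>v v"
    unfolding eigenvector_def using M by auto
  have "v \<bullet> v > 0" using v(1,2) scalar_prod_self_eq_0_iff[OF v(1)] scalar_prod_self_nonneg[of v]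
    by linarith
  define u where "u = (1 / vec_norm v) \<cdot>\<^sub>v v"
  have u: "u \<in> carrier_vec (Suc m)" "u \<bullet> u = 1" "M *\<^sub>v u = e \<cdot>\<^sub>v u"
    unfolding u_def using v M \<open>v \<bullet> v > 0\<close> by (auto simp: mult_mat_vec smult_smult_assoc mult.commute)
  obtain W where W: "W \<in> carrier_mat (Suc m) (Suc m)" "transpose_mat W * W = 1\<^sub>m (Suc m)"
     "col W 0 = u" using orthonormal_completion[OF u(1,2)] by blast
  define C where "C = transpose_mat W * M * W"
  have C: "C \<in> carrier_mat (Suc m) (Suc m)" unfolding C_def using W M by auto
  have symC: "transpose_mat C = C" unfolding C_def by (rule transpose_congruence_sym[OF W(1) M sym])
  have MW: "M * W \<in> carrier_mat (Suc m) (Suc m)" using M W by auto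
  have "col C 0 = col (transpose_mat W * (M * W)) 0" unfolding C_def using W M by simp
  also have "\<dots> = transpose_mat W *\<^sub>v (M *\<^sub>v col W 0)"
    using col_mult2[of "transpose_mat W" "Suc m" "Suc m" "M * W" "Suc m" 0] col_mult2[OF M W(1)] W MW
    by simp
  also have "\<dots> = e \<cdot>\<^sub>v (transpose_mat W *\<^sub>v col W 0)"
    unfolding W(3) u(3) using W u by (simp add: mult_mat_vec)
  also have "transpose_mat W *\<^sub>v col W 0 = col (transpose_mat W * W) 0"
    by (rule col_mult2[symmetric]) (use W in auto)
  finally have colC: "col C 0 = e \<cdot>\<^sub>v unit_vec (Suc m) 0" unfolding W(2) by simp
  have Ca0: "C $$ (a, 0) = (if a = 0 then e else 0)" and C0a: "C $$ (0, a) = (if a = 0 then e else 0)"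
    if "a < Suc m" for a
    using arg_cong[OF colC, of "\<lambda>x. x $ a"] arg_cong[OF symC, of "\<lambda>x. x $$ (a,0)"] that C
    by (auto simp: unit_vec_def)
  define M' where "M' = mat m m (\<lambda>(a,b). C $$ (Suc a, Suc b))"
  have "transpose_mat M' = M'" unfolding M'_def
    using symC C by (intro eq_matI; simp) (metis Suc_less_eq index_transpose_mat(1) carrier_matD)
  moreover have "C = four_block_mat (mat 1 1 (\<lambda>_. e)) (0\<^sub>m 1 m) (0\<^sub>m m 1) M'"
    by (rule eq_matI) (use C Ca0 C0a in \<open>auto simp: M'_def less_Suc_eq_0_disj\<close>)
  moreover have "M' \<in> carrier_mat m m" unfolding M'_def by simp
  ultimately show ?thesis using W unfolding C_def by blast
qed


lemma assoc_mult_mat_4: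
  "A \<in> carrier_mat n1 n2 \<Longrightarrow> B \<in> carrier_mat n2 n3 \<Longrightarrow> C \<in> carrier_mat n3 n4 \<Longrightarrow>
   D \<in> carrier_mat n4 n5 \<Longrightarrow> (A * B) * (C * D) = A * ((B * C) * D)"
  by (subst assoc_mult_mat, auto)+

lemma assoc_mult_mat_5:
  "A \<in> carrier_mat n1 n2 \<Longrightarrow> B \<in> carrier_mat n2 n3 \<Longrightarrow> C \<in> carrier_mat n3 n4 \<Longrightarrow>
   D \<in> carrier_mat n4 n5 \<Longrightarrow> E \<in> carrier_mat n5 n6 \<Longrightarrow>
   (A * B) * C * (D * E) = A * (B * C * D) * E"
  by (subst assoc_mult_mat, auto)+

lemma sym_mat_orthogonally_diagonalizable:
  fixes M :: "real mat"
  assumes "M \<in> carrier_mat n n" and "transpose_mat M = M"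
  shows "\<exists>U \<in> carrier_mat n n. transpose_mat U * U = 1\<^sub>m n \<and> diagonal_mat (transpose_mat U * M * U)"
  using assms
proof (induction n arbitrary: M)
  case 0
  show ?case by (rule bexI[of _ "1\<^sub>m 0"]) (auto simp: diagonal_mat_def)
next
  case (Suc m M)
  obtain W e M' where W: "W \<in> carrier_mat (Suc m) (Suc m)" "transpose_mat W * W = 1\<^sub>m (Suc m)"
    and M': "M' \<in> carrier_mat m m" "transpose_mat M' = M'"
    and blk: "transpose_mat W * M * W = four_block_mat (mat 1 1 (\<lambda>_. e)) (0\<^sub>m 1 m) (0\<^sub>m m 1) M'"
    using sym_mat_deflation[OF Suc.prems] by blast
  from Suc.IH[OF M'] obtain U' where U': "U' \<in> carrier_mat m m" "transpose_mat U' * U' = 1\<^sub>m m"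
    "diagonal_mat (transpose_mat U' * M' * U')" by blast
  define B where "B = four_block_mat (1\<^sub>m 1) (0\<^sub>m 1 m) (0\<^sub>m m 1) U'"
  have B: "B \<in> carrier_mat (Suc m) (Suc m)" unfolding B_def using U'
    by (metis four_block_carrier_mat one_carrier_mat plus_1_eq_Suc)
  have BT: "transpose_mat B = four_block_mat (1\<^sub>m 1) (0\<^sub>m 1 m) (0\<^sub>m m 1) (transpose_mat U')"
    unfolding B_def using U' by (subst transpose_four_block_mat) auto
  define U where "U = W * B"
  have U: "U \<in> carrier_mat (Suc m) (Suc m)" unfolding U_def using W B by auto
  have TU: "transpose_mat U = transpose_mat B * transpose_mat W"
    unfolding U_def by (rule transpose_mult[OF W(1) B])
  have "transpose_mat U * U = transpose_mat B * ((transpose_mat W * W) * B)"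
    unfolding TU unfolding U_def by (rule assoc_mult_mat_4) (use W B in auto)
  also have "\<dots> = 1\<^sub>m (Suc m)" unfolding W(2) BT using B U'
    by (simp add: B_def mult_four_block_mat[of _ 1 1 _ m _ m _ _ 1 _ m])
  finally have UU: "transpose_mat U * U = 1\<^sub>m (Suc m)" .
  have "transpose_mat U * M * U = transpose_mat B * (transpose_mat W * M * W) * B"
    unfolding TU unfolding U_def by (rule assoc_mult_mat_5) (use W B Suc.prems(1) in auto)
  also have "\<dots> = four_block_mat (mat 1 1 (\<lambda>_. e)) (0\<^sub>m 1 m) (0\<^sub>m m 1) (transpose_mat U' * M' * U')"
    unfolding blk BT unfolding B_def using U' M'
    by (subst mult_four_block_mat[of _ 1 1 _ m _ m _ _ 1 _ m], auto,
        subst mult_four_block_mat[of _ 1 1 _ m _ m _ _ 1 _ m], auto)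
  finally have "diagonal_mat (transpose_mat U * M * U)"
    using U'(3) U'(1) M' unfolding diagonal_mat_def by auto
  thus ?case using U UU by blast
qed

lemma prod_linear_factors_eq_imp_mset_eq:
  fixes xs ys :: "real list"
  shows "(\<Prod>a\<leftarrow>xs. [:- a, 1:]) = (\<Prod>a\<leftarrow>ys. [:- a, 1:]) \<Longrightarrow> mset xs = mset ys"
proof (induction xs arbitrary: ys)
  case Nil
  show ?case
  proof (cases ys)
    case (Cons y ys')
    have "poly (\<Prod>a\<leftarrow>ys. [:- a, 1:]) y = 0" unfolding Cons by simp
    with Nil.prems show ?thesis by simp
  qed simp
next
  case (Cons x xs)
  have "poly (\<Prod>a\<leftarrow>ys. [:- a, 1:]) x = 0" unfolding Cons.prems[symmetric] by simp
  hence "x \<in> set ys" by (auto simp: poly_prod_list prod_list_zero_iff)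
  hence ys: "mset ys = add_mset x (mset (remove1 x ys))" by simp
  have prod_mset: "(\<Prod>a\<leftarrow>zs. [:- a, 1:]) = prod_mset (image_mset (\<lambda>a. [:- a, 1:]) (mset zs))"
    for zs :: "real list" by (induct zs) auto
  have "[:- x, 1:] * (\<Prod>a\<leftarrow>xs. [:- a, 1:]) = [:- x, 1:] * (\<Prod>a\<leftarrow>remove1 x ys. [:- a, 1:])"
    using Cons.prems unfolding prod_mset ys by simp
  moreover have "[:- x, 1:] \<noteq> (0 :: real poly)" by simp
  ultimately have "(\<Prod>a\<leftarrow>xs. [:- a, 1:]) = (\<Prod>a\<leftarrow>remove1 x ys. [:- a, 1:])"
    using mult_left_cancel by blast
  from Cons.IH[OF this] show ?case by (simp only: mset.simps ys)
qed

lemma index_transpose_mult_self: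
  "X \<in> carrier_mat d n \<Longrightarrow> k < n \<Longrightarrow> l < n \<Longrightarrow> (transpose_mat X * X) $$ (k,l) = col X k \<bullet> col X l"
  by (simp add: row_transpose)

lemma orthogonal_col_norm:
  "U \<in> carrier_mat n n \<Longrightarrow> transpose_mat U * U = 1\<^sub>m n \<Longrightarrow> k < n \<Longrightarrow> col U k \<bullet> col U k = 1"
  using index_transpose_mult_self[of U n n k k] by simp

lemma transpose_congruence_gram:
  fixes A U :: "real mat" assumes A: "A \<in> carrier_mat d n" and U: "U \<in> carrier_mat n n"
  shows "transpose_mat U * (transpose_mat A * A) * U = transpose_mat (A * U) * (A * U)"
proof -
  have "transpose_mat U * transpose_mat A * (A * U) = transpose_mat U * ((transpose_mat A * A) * U)"
    by (rule assoc_mult_mat_4) (use A U in auto)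
  moreover have "transpose_mat U * (transpose_mat A * A) * U = transpose_mat U * ((transpose_mat A * A) * U)"
    by (rule assoc_mult_mat) (use A U in auto)
  ultimately show ?thesis unfolding transpose_mult[OF A U] by simp
qed

lemma nuclear_norm_diagonalization:
  fixes A U :: "real mat"
  assumes A: "A \<in> carrier_mat d n" and U: "U \<in> carrier_mat n n" "transpose_mat U * U = 1\<^sub>m n"
    and diag: "diagonal_mat (transpose_mat U * (transpose_mat A * A) * U)"
  shows "nuclear_norm A = (\<Sum>k<n. vec_norm (A *\<^sub>v col U k))"
proof -
  define M where "M = transpose_mat A * A"
  define D where "D = transpose_mat U * M * U"
  have M: "M \<in> carrier_mat n n" unfolding M_def using A by auto
  have D: "D \<in> carrier_mat n n" unfolding D_def using U M by auto
  have UU: "U * transpose_mat U = 1\<^sub>m n"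
    using mat_mult_left_right_inverse[of "transpose_mat U" n U] U by auto
  have "U * D * transpose_mat U = (U * transpose_mat U) * M * (U * transpose_mat U)"
    unfolding D_def by (rule assoc_mult_mat_5[symmetric]) (use U M in auto)
  hence "M = U * D * transpose_mat U" using UU M by simp
  hence "similar_mat M D" unfolding similar_mat_def
    by (intro exI[of _ U] exI[of _ "transpose_mat U"] similar_mat_witI[of _ _ n]) (use UU U M D in auto)
  moreover have "upper_triangular D" using diag D unfolding D_def M_def diagonal_mat_def by auto
  ultimately have cpM: "char_poly M = (\<Prod>a\<leftarrow>diag_mat D. [:- a, 1:])"
    using char_poly_similar char_poly_upper_triangular[OF D] by metis
  have "char_poly M = (\<Prod>e\<leftarrow>sq_singular_values A. [:- e, 1:])"
    unfolding sq_singular_values_def M_def by (rule someI[of _ "diag_mat D"]) (use cpM in \<open>simp add: M_def\<close>)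
  hence "mset (sq_singular_values A) = mset (diag_mat D)"
    using cpM by (intro prod_linear_factors_eq_imp_mset_eq) simp
  hence "nuclear_norm A = sum_list (map sqrt (diag_mat D))"
    unfolding nuclear_norm_def by (metis mset_map sum_mset_sum_list)
  also have "\<dots> = (\<Sum>k<n. sqrt (D $$ (k,k)))"
    using D unfolding diag_mat_def by (simp add: sum_set_upt_conv_sum_list_nat[symmetric] lessThan_atLeast0)
  also have "\<dots> = (\<Sum>k<n. vec_norm (A *\<^sub>v col U k))"
  proof (intro sum.cong refl)
    fix k assume k: "k \<in> {..<n}"
    have "D = transpose_mat (A * U) * (A * U)"
      unfolding D_def M_def by (rule transpose_congruence_gram[OF A U(1)])
    thus "sqrt (D $$ (k,k)) = vec_norm (A *\<^sub>v col U k)"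
      using index_transpose_mult_self[of "A * U" d n k k] col_mult2[OF A U(1)] A U k by simp
  qed
  finally show ?thesis .
qed


lemma nuclear_norm_eq_sum_vec_norm:
  fixes A :: "real mat" assumes A: "A \<in> carrier_mat d n"
  shows "\<exists>U \<in> carrier_mat n n. transpose_mat U * U = 1\<^sub>m n \<and> U * transpose_mat U = 1\<^sub>m n \<and>
    (\<forall>k<n. \<forall>l<n. k \<noteq> l \<longrightarrow> (A *\<^sub>v col U k) \<bullet> (A *\<^sub>v col U l) = 0) \<and>
    nuclear_norm A = (\<Sum>k<n. vec_norm (A *\<^sub>v col U k))"
proof -
  have M: "transpose_mat A * A \<in> carrier_mat n n" using A by auto
  have "transpose_mat (transpose_mat A * A) = transpose_mat A * A"
    using transpose_mult[of "transpose_mat A" n d A n] A by simp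
  then obtain U where U: "U \<in> carrier_mat n n" "transpose_mat U * U = 1\<^sub>m n"
    and diag: "diagonal_mat (transpose_mat U * (transpose_mat A * A) * U)"
    using sym_mat_orthogonally_diagonalizable[OF M] by blast
  have "U * transpose_mat U = 1\<^sub>m n"
    using mat_mult_left_right_inverse[of "transpose_mat U" n U] U by auto
  moreover have "(A *\<^sub>v col U k) \<bullet> (A *\<^sub>v col U l) = 0" if "k < n" "l < n" "k \<noteq> l" for k l
  proof -
    from diag[unfolded transpose_congruence_gram[OF A U(1)]]
    show ?thesis using diag that index_transpose_mult_self[of "A * U" d n k l] col_mult2[OF A U(1)] A U
      unfolding diagonal_mat_def by auto
  qed
  ultimately show ?thesis using U nuclear_norm_diagonalization[OF A U diag] by blast
qed

lemma bessel_inequality: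
  fixes w :: "'i \<Rightarrow> real vec" and z :: "real vec"
  assumes I: "finite I" and w: "\<And>m. m \<in> I \<Longrightarrow> w m \<in> carrier_vec d"
    and orth: "\<And>m l. m \<in> I \<Longrightarrow> l \<in> I \<Longrightarrow> m \<noteq> l \<Longrightarrow> w m \<bullet> w l = 0"
    and norm: "\<And>m. m \<in> I \<Longrightarrow> w m \<bullet> w m = 1 \<or> w m = 0\<^sub>v d"
    and z: "z \<in> carrier_vec d"
  shows "(\<Sum>m\<in>I. (z \<bullet> w m)\<^sup>2) \<le> z \<bullet> z"
proof -
  define c where "c m = z \<bullet> w m" for m
  text \<open>\<open>y\<close> is the orthogonal projection of \<open>z\<close> onto the span of the \<open>w m\<close>.\<close>
  define y where "y r = (\<Sum>m\<in>I. c m * w m $ r)" for r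
  have zy: "(\<Sum>r<d. z $ r * y r) = (\<Sum>m\<in>I. (c m)\<^sup>2)"
  proof -
    have "(\<Sum>r<d. z $ r * y r) = (\<Sum>m\<in>I. c m * (\<Sum>r<d. z $ r * w m $ r))"
      unfolding y_def by (simp add: sum_distrib_left mult.left_commute sum.swap[of _ "{..<d}"])
    thus ?thesis by (simp add: c_def scalar_prod_eq_sum[OF z w] power2_eq_square)
  qed
  have yy: "(\<Sum>r<d. y r * y r) = (\<Sum>m\<in>I. (c m)\<^sup>2)"
  proof -
    have "(\<Sum>r<d. y r * y r) = (\<Sum>r<d. \<Sum>m\<in>I. \<Sum>l\<in>I. c m * c l * (w m $ r * w l $ r))"
      unfolding y_def by (simp add: sum_product mult_ac)
    also have "\<dots> = (\<Sum>m\<in>I. \<Sum>r<d. \<Sum>l\<in>I. c m * c l * (w m $ r * w l $ r))"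
      by (rule sum.swap)
    also have "\<dots> = (\<Sum>m\<in>I. \<Sum>l\<in>I. c m * c l * (\<Sum>r<d. w m $ r * w l $ r))"
      by (subst sum.swap) (simp add: sum_distrib_left)
    also have "\<dots> = (\<Sum>m\<in>I. \<Sum>l\<in>I. c m * c l * (w m \<bullet> w l))"
      by (intro sum.cong refl) (simp add: scalar_prod_eq_sum[OF w w])
    also have "\<dots> = (\<Sum>m\<in>I. c m * c m * (w m \<bullet> w m))"
    proof (intro sum.cong refl)
      fix m assume m: "m \<in> I"
      have "(\<Sum>l\<in>I - {m}. c m * c l * (w m \<bullet> w l)) = 0" by (rule sum.neutral) (use orth m in auto)
      thus "(\<Sum>l\<in>I. c m * c l * (w m \<bullet> w l)) = c m * c m * (w m \<bullet> w m)"
        using I m by (simp add: sum.remove)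
    qed
    also have "\<dots> = (\<Sum>m\<in>I. (c m)\<^sup>2)"
    proof (intro sum.cong refl)
      fix m assume "m \<in> I"
      thus "c m * c m * (w m \<bullet> w m) = (c m)\<^sup>2"
        using norm[of m] z by (auto simp: c_def power2_eq_square)
    qed
    finally show ?thesis .
  qed
  have "0 \<le> (\<Sum>r<d. (z $ r - y r)\<^sup>2)" by (intro sum_nonneg) auto
  also have "\<dots> = (\<Sum>r<d. z $ r * z $ r) - 2 * (\<Sum>r<d. z $ r * y r) + (\<Sum>r<d. y r * y r)"
    by (simp add: power2_eq_square algebra_simps sum.distrib sum_subtractf sum_distrib_left)
  also have "\<dots> = z \<bullet> z - (\<Sum>m\<in>I. (c m)\<^sup>2)" unfolding zy yy scalar_prod_eq_sum[OF z z] by simp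
  finally show ?thesis unfolding c_def by simp
qed

lemma scalar_prod_mult_vec_expansion:
  fixes A U :: "real mat"
  assumes A: "A \<in> carrier_mat d n" and U: "U \<in> carrier_mat n n" and UU: "U * transpose_mat U = 1\<^sub>m n"
    and q: "q \<in> carrier_vec n" and w: "w \<in> carrier_vec d"
  shows "(A *\<^sub>v q) \<bullet> w = (\<Sum>k<n. (col U k \<bullet> q) * ((A *\<^sub>v col U k) \<bullet> w))"
proof -
  define c where "c = transpose_mat U *\<^sub>v q"
  have c: "c \<in> carrier_vec n" unfolding c_def using U q by auto
  have AU: "A * U \<in> carrier_mat d n" using A U by auto
  have "A *\<^sub>v q = A *\<^sub>v ((U * transpose_mat U) *\<^sub>v q)" unfolding UU using q by simp
  hence "A *\<^sub>v q = (A * U) *\<^sub>v c" unfolding c_def using A U q by simp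
  hence "(A *\<^sub>v q) \<bullet> w = (transpose_mat (A * U) *\<^sub>v w) \<bullet> c"
    using transpose_vec_mult_scalar[OF AU c w] comm_scalar_prod[of w d] AU c w by auto
  also have "\<dots> = (\<Sum>k<n. (col U k \<bullet> q) * ((A *\<^sub>v col U k) \<bullet> w))"
  proof -
    have "(transpose_mat (A * U) *\<^sub>v w) $ k = (A *\<^sub>v col U k) \<bullet> w" if "k < n" for k
    proof -
      have "(transpose_mat (A * U) *\<^sub>v w) $ k = row (transpose_mat (A * U)) k \<bullet> w"
        by (rule index_mult_mat_vec) (use U that in simp)
      also have "row (transpose_mat (A * U)) k = col (A * U) k" by (rule row_transpose) (use AU U that in simp)
      also have "\<dots> = A *\<^sub>v col U k" by (rule col_mult2[OF A U that])
      finally show ?thesis .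
    qed
    moreover have "c $ k = col U k \<bullet> q" if "k < n" for k using that U unfolding c_def by (simp add: row_transpose)
    ultimately show ?thesis using AU w c
      by (subst scalar_prod_eq_sum[of _ n]) (auto simp: mult.commute)
  qed
  finally show ?thesis .
qed

lemma sum_sq_scalar_prod_orthogonal_cols:
  fixes V :: "real mat" assumes V: "V \<in> carrier_mat n n" and VV: "V * transpose_mat V = 1\<^sub>m n"
    and z: "z \<in> carrier_vec n"
  shows "(\<Sum>m<n. (col V m \<bullet> z)\<^sup>2) = z \<bullet> z"
proof -
  define y where "y = transpose_mat V *\<^sub>v z"
  have y: "y \<in> carrier_vec n" unfolding y_def using V z by auto
  have "y \<bullet> y = (transpose_mat V *\<^sub>v z) \<bullet> y" unfolding y_def ..
  also have "\<dots> = z \<bullet> (V *\<^sub>v y)" by (rule transpose_vec_mult_scalar[OF V y z])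
  also have "V *\<^sub>v y = (V * transpose_mat V) *\<^sub>v z" unfolding y_def using V z by simp
  also have "\<dots> = z" unfolding VV using z by simp
  finally have "y \<bullet> y = z \<bullet> z" .
  moreover have "y \<bullet> y = (\<Sum>m<n. (col V m \<bullet> z)\<^sup>2)"
    using y V unfolding scalar_prod_eq_sum[OF y y] by (simp add: y_def row_transpose power2_eq_square)
  ultimately show ?thesis by simp
qed

lemma sum_scalar_prod_le_sum_vec_norm:
  fixes A U :: "real mat" and q w :: "'i \<Rightarrow> real vec"
  assumes A: "A \<in> carrier_mat d n" and U: "U \<in> carrier_mat n n" and UU: "U * transpose_mat U = 1\<^sub>m n"
    and q: "\<And>m. m \<in> I \<Longrightarrow> q m \<in> carrier_vec n" and w: "\<And>m. m \<in> I \<Longrightarrow> w m \<in> carrier_vec d"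
    and bessel: "\<And>z. z \<in> carrier_vec d \<Longrightarrow> (\<Sum>m\<in>I. (z \<bullet> w m)\<^sup>2) \<le> z \<bullet> z"
  shows "(\<Sum>m\<in>I. (A *\<^sub>v q m) \<bullet> w m) \<le>
    (\<Sum>k<n. sqrt (\<Sum>m\<in>I. (col U k \<bullet> q m)\<^sup>2) * vec_norm (A *\<^sub>v col U k))"
proof -
  have "(\<Sum>m\<in>I. (A *\<^sub>v q m) \<bullet> w m) = (\<Sum>m\<in>I. \<Sum>k<n. (col U k \<bullet> q m) * ((A *\<^sub>v col U k) \<bullet> w m))"
    by (intro sum.cong refl scalar_prod_mult_vec_expansion[OF A U UU q w])
  also have "\<dots> = (\<Sum>k<n. \<Sum>m\<in>I. (col U k \<bullet> q m) * ((A *\<^sub>v col U k) \<bullet> w m))"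
    by (rule sum.swap)
  also have "\<dots> \<le> (\<Sum>k<n. sqrt (\<Sum>m\<in>I. (col U k \<bullet> q m)\<^sup>2) * sqrt (\<Sum>m\<in>I. ((A *\<^sub>v col U k) \<bullet> w m)\<^sup>2))"
    by (intro sum_mono) (rule sum_mult_le_L2_set[unfolded L2_set_def])
  also have "\<dots> \<le> (\<Sum>k<n. sqrt (\<Sum>m\<in>I. (col U k \<bullet> q m)\<^sup>2) * vec_norm (A *\<^sub>v col U k))"
    using A U by (intro sum_mono mult_left_mono real_sqrt_le_mono bessel) (auto intro: sum_nonneg)
  finally show ?thesis .
qed

lemma sum_scalar_prod_le_nuclear_norm:
  fixes A V :: "real mat" and w :: "nat \<Rightarrow> real vec"
  assumes A: "A \<in> carrier_mat d n" and V: "V \<in> carrier_mat n n" and VV: "V * transpose_mat V = 1\<^sub>m n"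
    and w: "\<And>m. m < n \<Longrightarrow> w m \<in> carrier_vec d"
    and bessel: "\<And>z. z \<in> carrier_vec d \<Longrightarrow> (\<Sum>m<n. (z \<bullet> w m)\<^sup>2) \<le> z \<bullet> z"
  shows "(\<Sum>m<n. (A *\<^sub>v col V m) \<bullet> w m) \<le> nuclear_norm A"
proof -
  obtain U where U: "U \<in> carrier_mat n n" "transpose_mat U * U = 1\<^sub>m n" "U * transpose_mat U = 1\<^sub>m n"
    and nn: "nuclear_norm A = (\<Sum>k<n. vec_norm (A *\<^sub>v col U k))"
    using nuclear_norm_eq_sum_vec_norm[OF A] by blast
  have "(\<Sum>m<n. (col U k \<bullet> col V m)\<^sup>2) = 1" if k: "k < n" for k
  proof -
    have "(\<Sum>m<n. (col U k \<bullet> col V m)\<^sup>2) = (\<Sum>m<n. (col V m \<bullet> col U k)\<^sup>2)"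
      using U V k by (intro sum.cong refl) (simp add: comm_scalar_prod[of _ n])
    also have "\<dots> = 1"
      using sum_sq_scalar_prod_orthogonal_cols[OF V VV] orthogonal_col_norm[OF U(1,2) k] U k by simp
    finally show ?thesis .
  qed
  hence "(\<Sum>k<n. sqrt (\<Sum>m<n. (col U k \<bullet> col V m)\<^sup>2) * vec_norm (A *\<^sub>v col U k)) = nuclear_norm A"
    unfolding nn by simp
  moreover have "(\<Sum>m<n. (A *\<^sub>v col V m) \<bullet> w m)
      \<le> (\<Sum>k<n. sqrt (\<Sum>m<n. (col U k \<bullet> col V m)\<^sup>2) * vec_norm (A *\<^sub>v col U k))"
    by (rule sum_scalar_prod_le_sum_vec_norm[OF A U(1) U(3)]) (use V w bessel in auto)
  ultimately show ?thesis by simp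
qed

lemma nuclear_norm_attained:
  fixes B :: "real mat" assumes B: "B \<in> carrier_mat d n"
  obtains V w where "V \<in> carrier_mat n n" "transpose_mat V * V = 1\<^sub>m n" "V * transpose_mat V = 1\<^sub>m n"
    "\<And>m. m < n \<Longrightarrow> w m \<in> carrier_vec d" "\<And>m. m < n \<Longrightarrow> w m \<bullet> w m \<le> 1"
    "\<And>z. z \<in> carrier_vec d \<Longrightarrow> (\<Sum>m<n. (z \<bullet> w m)\<^sup>2) \<le> z \<bullet> z"
    "nuclear_norm B = (\<Sum>m<n. (B *\<^sub>v col V m) \<bullet> w m)"
proof -
  obtain V where V: "V \<in> carrier_mat n n" "transpose_mat V * V = 1\<^sub>m n" "V * transpose_mat V = 1\<^sub>m n"
    and orth: "\<And>k l. k < n \<Longrightarrow> l < n \<Longrightarrow> k \<noteq> l \<Longrightarrow> (B *\<^sub>v col V k) \<bullet> (B *\<^sub>v col V l) = 0"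
    and nn: "nuclear_norm B = (\<Sum>k<n. vec_norm (B *\<^sub>v col V k))"
    using nuclear_norm_eq_sum_vec_norm[OF B] by blast
  define b where "b m = B *\<^sub>v col V m" for m
  define s where "s m = vec_norm (b m)" for m
  define w where "w m = (if s m = 0 then 0\<^sub>v d else (1 / s m) \<cdot>\<^sub>v b m)" for m
  have b: "b m \<in> carrier_vec d" if "m < n" for m unfolding b_def using B V that by auto
  have w: "w m \<in> carrier_vec d" if "m < n" for m unfolding w_def using b[OF that] by auto
  have bb: "b m \<bullet> b m = (s m)\<^sup>2" for m unfolding s_def by simp
  have bw: "b m \<bullet> w m = s m" if "m < n" for m
    using b[OF that] bb[of m] unfolding w_def by (simp add: power2_eq_square)
  have ww: "w m \<bullet> w m = 1 \<or> w m = 0\<^sub>v d" if "m < n" for m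
    using b[OF that] bb[of m] unfolding w_def by (simp add: power2_eq_square field_simps)
  have "w m \<bullet> w l = 0" if "m < n" "l < n" "m \<noteq> l" for m l
    using orth[OF that] b[OF that(1)] b[OF that(2)] unfolding w_def b_def[symmetric] by auto
  hence bessel: "(\<Sum>m<n. (z \<bullet> w m)\<^sup>2) \<le> z \<bullet> z" if "z \<in> carrier_vec d" for z
    using bessel_inequality[of "{..<n}" w d z] w ww that by auto
  have "nuclear_norm B = (\<Sum>m<n. (B *\<^sub>v col V m) \<bullet> w m)"
    unfolding nn using bw unfolding b_def s_def by simp
  moreover have "w m \<bullet> w m \<le> 1" if "m < n" for m using ww[OF that] by auto
  ultimately show ?thesis using that[OF V w _ bessel] by simp
qed

lemma nuclear_norm_nonneg:
  assumes "A \<in> carrier_mat d n" shows "0 \<le> nuclear_norm A"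
proof -
  obtain U where "nuclear_norm A = (\<Sum>k<n. vec_norm (A *\<^sub>v col U k))"
    using nuclear_norm_eq_sum_vec_norm[OF assms] by blast
  thus ?thesis by (simp add: sum_nonneg)
qed

lemma nuclear_norm_zero_mat: "nuclear_norm (0\<^sub>m d n :: real mat) = 0"
proof -
  have "nuclear_norm (0\<^sub>m d n :: real mat) = (\<Sum>k<n. vec_norm (0\<^sub>m d n *\<^sub>v col (1\<^sub>m n) k))"
    by (rule nuclear_norm_diagonalization) (auto simp: diagonal_mat_def)
  also have "\<dots> = 0"
    by (intro sum.neutral ballI) (auto simp: scalar_prod_def)
  finally show ?thesis .
qed

lemma mult_unit_vec: "(A :: real mat) \<in> carrier_mat d n \<Longrightarrow> l < n \<Longrightarrow> A *\<^sub>v unit_vec n l = col A l"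
  using col_mult2[of A d n "1\<^sub>m n" n l] by simp

lemma vec_norm_col_le_nuclear_norm:
  fixes A :: "real mat" assumes A: "A \<in> carrier_mat d n" and l: "l < n"
  shows "vec_norm (col A l) \<le> nuclear_norm A"
proof -
  define b where "b = col A l"
  define s where "s = vec_norm b"
  define w where "w m = (if m = l \<and> s \<noteq> 0 then (1 / s) \<cdot>\<^sub>v b else 0\<^sub>v d)" for m
  have b: "b \<in> carrier_vec d" unfolding b_def using A l by auto
  have w: "w m \<in> carrier_vec d" for m unfolding w_def using b by auto
  have bb: "b \<bullet> b = s\<^sup>2" unfolding s_def by simp
  have "w m \<bullet> w m = 1 \<or> w m = 0\<^sub>v d" for m
    unfolding w_def using b bb by (auto simp: power2_eq_square field_simps)
  hence bessel: "(\<Sum>m<n. (z \<bullet> w m)\<^sup>2) \<le> z \<bullet> z" if "z \<in> carrier_vec d" for z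
    by (intro bessel_inequality[of "{..<n}" w d]) (use b w that in \<open>auto simp: w_def\<close>)
  have "(\<Sum>m<n. (A *\<^sub>v col (1\<^sub>m n) m) \<bullet> w m) = (\<Sum>m<n. if m = l then b \<bullet> w l else 0)"
    using A by (intro sum.cong refl) (auto simp: w_def b_def mult_unit_vec)
  also have "\<dots> = s" using l b bb unfolding w_def by (cases "s = 0") (auto simp: power2_eq_square)
  finally have "(\<Sum>m<n. (A *\<^sub>v col (1\<^sub>m n) m) \<bullet> w m) = s" .
  moreover have "(\<Sum>m<n. (A *\<^sub>v col (1\<^sub>m n) m) \<bullet> w m) \<le> nuclear_norm A"
    by (rule sum_scalar_prod_le_nuclear_norm[OF A _ _ w bessel]) auto
  ultimately show ?thesis unfolding s_def b_def by simp
qed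

lemma nuclear_norm_le_perturbation:
  fixes A B :: "real mat" assumes A: "A \<in> carrier_mat d n" and B: "B \<in> carrier_mat d n"
    and E: "\<And>v. v \<in> carrier_vec n \<Longrightarrow> v \<bullet> v \<le> 1 \<Longrightarrow> vec_norm (B *\<^sub>v v - A *\<^sub>v v) \<le> E"
  shows "nuclear_norm B \<le> nuclear_norm A + n * E"
proof -
  obtain V w where V: "V \<in> carrier_mat n n" "transpose_mat V * V = 1\<^sub>m n" "V * transpose_mat V = 1\<^sub>m n"
    and w: "\<And>m. m < n \<Longrightarrow> w m \<in> carrier_vec d" "\<And>m. m < n \<Longrightarrow> w m \<bullet> w m \<le> 1"
    and bessel: "\<And>z. z \<in> carrier_vec d \<Longrightarrow> (\<Sum>m<n. (z \<bullet> w m)\<^sup>2) \<le> z \<bullet> z"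
    and nn: "nuclear_norm B = (\<Sum>m<n. (B *\<^sub>v col V m) \<bullet> w m)"
    by (rule nuclear_norm_attained[OF B]) blast
  have split: "(B *\<^sub>v col V m) \<bullet> w m = (A *\<^sub>v col V m) \<bullet> w m + (B *\<^sub>v col V m - A *\<^sub>v col V m) \<bullet> w m"
    if "m < n" for m
    using w[OF that] A B V that by (subst minus_scalar_prod_distrib[of _ d]) auto
  have err: "(B *\<^sub>v col V m - A *\<^sub>v col V m) \<bullet> w m \<le> E" if m: "m < n" for m
  proof -
    have "(B *\<^sub>v col V m - A *\<^sub>v col V m) \<bullet> w m \<le> vec_norm (B *\<^sub>v col V m - A *\<^sub>v col V m) * vec_norm (w m)"
      by (rule scalar_prod_le_vec_norm[of _ d]) (use A B V w m in auto)
    also have "\<dots> \<le> E * 1"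
    proof (rule mult_mono)
      show "vec_norm (B *\<^sub>v col V m - A *\<^sub>v col V m) \<le> E"
        using V m orthogonal_col_norm[OF V(1,2) m] by (intro E) auto
      show "0 \<le> E"
        by (rule order_trans[OF real_sqrt_ge_zero[OF scalar_prod_self_nonneg] E[of "0\<^sub>v n"]]) auto
    qed (use w[OF m] in auto)
    finally show ?thesis by simp
  qed
  have "nuclear_norm B = (\<Sum>m<n. (A *\<^sub>v col V m) \<bullet> w m) + (\<Sum>m<n. (B *\<^sub>v col V m - A *\<^sub>v col V m) \<bullet> w m)"
    unfolding nn by (simp add: split sum.distrib)
  also have "\<dots> \<le> nuclear_norm A + (\<Sum>m<n. E)"
    by (intro add_mono sum_scalar_prod_le_nuclear_norm[OF A V(1,3)] sum_mono err) (use w bessel in auto)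
  finally show ?thesis by simp
qed

lemma mult_vec_diff_single_col:
  fixes A B :: "real mat"
  assumes A: "A \<in> carrier_mat d n" and B: "B \<in> carrier_mat d n" and l: "l < n"
    and cols: "\<And>k. k < n \<Longrightarrow> k \<noteq> l \<Longrightarrow> col B k = col A k" and v: "v \<in> carrier_vec n"
  shows "B *\<^sub>v v - A *\<^sub>v v = v $ l \<cdot>\<^sub>v (col B l - col A l)"
proof (rule eq_vecI)
  fix r assume "r < dim_vec (v $ l \<cdot>\<^sub>v (col B l - col A l))"
  hence r: "r < d" using A by simp
  have "B $$ (r,k) = A $$ (r,k)" if "k < n" "k \<noteq> l" for k
    using arg_cong[OF cols[OF that], of "\<lambda>x. x $ r"] r that A B by simp
  hence "(B *\<^sub>v v - A *\<^sub>v v) $ r = (\<Sum>k<n. if k = l then (B $$ (r,l) - A $$ (r,l)) * v $ l else 0)"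
    using A B v r by (auto simp: scalar_prod_eq_sum[of _ n] sum_subtractf[symmetric] left_diff_distrib
      intro!: sum.cong simp del: sum.delta)
  thus "(B *\<^sub>v v - A *\<^sub>v v) $ r = (v $ l \<cdot>\<^sub>v (col B l - col A l)) $ r" using A B l r by simp
qed (use A B in simp)

lemma nuclear_norm_le_col_perturbation:
  fixes A B :: "real mat"
  assumes A: "A \<in> carrier_mat d n" and B: "B \<in> carrier_mat d n" and l: "l < n"
    and cols: "\<And>k. k < n \<Longrightarrow> k \<noteq> l \<Longrightarrow> col B k = col A k"
  shows "nuclear_norm B \<le> nuclear_norm A + n * vec_norm (col B l - col A l)"
proof (rule nuclear_norm_le_perturbation[OF A B])
  fix v :: "real vec" assume v: "v \<in> carrier_vec n" "v \<bullet> v \<le> 1"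
  have "(v $ l)\<^sup>2 \<le> v \<bullet> v"
    using member_le_sum[of l "{..<n}" "\<lambda>r. v $ r * v $ r"] v l
    by (simp add: scalar_prod_eq_sum[of _ n] power2_eq_square)
  hence "\<bar>v $ l\<bar> \<le> 1" using v(2) abs_square_le_1 by fastforce
  have "vec_norm (B *\<^sub>v v - A *\<^sub>v v) = \<bar>v $ l\<bar> * vec_norm (col B l - col A l)"
    using mult_vec_diff_single_col[OF A B l cols v(1)] vec_norm_smult by simp
  with \<open>\<bar>v $ l\<bar> \<le> 1\<close> show "vec_norm (B *\<^sub>v v - A *\<^sub>v v) \<le> vec_norm (col B l - col A l)"
    by (simp add: mult_left_le_one_le)
qed

definition avg_coords :: "nat \<Rightarrow> nat \<Rightarrow> real vec \<Rightarrow> real vec" where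
  "avg_coords i j v = v - ((v $ i - v $ j) / 2) \<cdot>\<^sub>v (unit_vec (dim_vec v) i - unit_vec (dim_vec v) j)"

context
  fixes i j n :: nat
  assumes ij: "i < n" "j < n" "i \<noteq> j"
begin

lemma avg_coords_carrier [simp]: "v \<in> carrier_vec n \<Longrightarrow> avg_coords i j v \<in> carrier_vec n"
  unfolding avg_coords_def by auto

lemma index_avg_coords:
  "v \<in> carrier_vec n \<Longrightarrow> l < n \<Longrightarrow>
   avg_coords i j v $ l = (if l = i \<or> l = j then (v $ i + v $ j) / 2 else v $ l)"
  unfolding avg_coords_def using ij by (auto simp: field_simps)

lemma scalar_prod_avg_coords:
  "u \<in> carrier_vec n \<Longrightarrow> v \<in> carrier_vec n \<Longrightarrow>
   u \<bullet> avg_coords i j v = u \<bullet> v - (u $ i - u $ j) * (v $ i - v $ j) / 2"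
  unfolding avg_coords_def using ij
  by (subst scalar_prod_minus_distrib[of _ n]) (auto simp: scalar_prod_minus_distrib[of _ n])

lemma avg_coords_sym:
  "u \<in> carrier_vec n \<Longrightarrow> v \<in> carrier_vec n \<Longrightarrow> u \<bullet> avg_coords i j v = v \<bullet> avg_coords i j u"
  using scalar_prod_avg_coords[of u v] scalar_prod_avg_coords[of v u] comm_scalar_prod[of u n v]
  by (simp add: algebra_simps)

lemma scalar_prod_self_avg_coords:
  assumes u: "u \<in> carrier_vec n"
  shows "avg_coords i j u \<bullet> avg_coords i j u = u \<bullet> u - (u $ i - u $ j)\<^sup>2 / 2"
proof -
  have "avg_coords i j u $ i - avg_coords i j u $ j = 0" using index_avg_coords[OF u] ij by simp
  hence "avg_coords i j u \<bullet> avg_coords i j u = u \<bullet> avg_coords i j u"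
    using scalar_prod_avg_coords[of "avg_coords i j u" u] avg_coords_sym[OF u u] u
    by (simp add: comm_scalar_prod[of _ n u])
  thus ?thesis using scalar_prod_avg_coords[OF u u] by (simp add: power2_eq_square)
qed

end

lemma sqrt_one_minus_half_le: "0 \<le> t \<Longrightarrow> t \<le> 2 \<Longrightarrow> sqrt (1 - t / 2) \<le> 1 - t / 4"
  by (rule real_le_lsqrt) (auto simp: power2_eq_square field_simps)

lemma sq_vec_norm_mult_vec_le:
  fixes A U :: "real mat"
  assumes A: "A \<in> carrier_mat d n" and U: "U \<in> carrier_mat n n" and UU: "U * transpose_mat U = 1\<^sub>m n"
    and e: "e \<in> carrier_vec n"
  shows "(A *\<^sub>v e) \<bullet> (A *\<^sub>v e) \<le>
    (\<Sum>k<n. (col U k \<bullet> e)\<^sup>2 * vec_norm (A *\<^sub>v col U k)) * (\<Sum>k<n. vec_norm (A *\<^sub>v col U k))"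
proof -
  define a where "a k = vec_norm (A *\<^sub>v col U k)" for k
  define S where "S = (\<Sum>k<n. \<bar>col U k \<bullet> e\<bar> * a k)"
  define z where "z = A *\<^sub>v e"
  define s where "s = vec_norm z"
  have z: "z \<in> carrier_vec d" unfolding z_def using A e by auto
  have a0: "0 \<le> a k" for k unfolding a_def by simp
  have S0: "0 \<le> S" unfolding S_def using a0 by (simp add: sum_nonneg)
  have s0: "0 \<le> s" and zz: "z \<bullet> z = s\<^sup>2" unfolding s_def by simp_all
  have "z \<bullet> z = (\<Sum>k<n. (col U k \<bullet> e) * ((A *\<^sub>v col U k) \<bullet> z))"
    by (subst (1) z_def) (rule scalar_prod_mult_vec_expansion[OF A U UU e z])
  also have "\<dots> \<le> (\<Sum>k<n. \<bar>col U k \<bullet> e\<bar> * (a k * s))"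
  proof (intro sum_mono)
    fix k assume "k \<in> {..<n}"
    hence "\<bar>(A *\<^sub>v col U k) \<bullet> z\<bar> \<le> a k * s"
      unfolding a_def s_def using A U z by (intro abs_scalar_prod_le_vec_norm[of _ d]) auto
    hence "\<bar>col U k \<bullet> e\<bar> * \<bar>(A *\<^sub>v col U k) \<bullet> z\<bar> \<le> \<bar>col U k \<bullet> e\<bar> * (a k * s)"
      by (rule mult_left_mono) simp
    thus "(col U k \<bullet> e) * ((A *\<^sub>v col U k) \<bullet> z) \<le> \<bar>col U k \<bullet> e\<bar> * (a k * s)"
      by (simp add: abs_mult[symmetric])
  qed
  also have "\<dots> = S * s" unfolding S_def by (simp add: sum_distrib_right mult.assoc)
  finally have "s * s \<le> S * s" using zz by (simp add: power2_eq_square)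
  hence "s \<le> S" using s0 S0 by (cases "s = 0") auto
  hence "z \<bullet> z \<le> S\<^sup>2" unfolding zz using s0 by (rule power_mono)
  also have "S\<^sup>2 \<le> (\<Sum>k<n. (col U k \<bullet> e)\<^sup>2 * a k) * (\<Sum>k<n. a k)"
  proof -
    have "S = (\<Sum>k<n. (\<bar>col U k \<bullet> e\<bar> * sqrt (a k)) * sqrt (a k))"
      unfolding S_def using a0 by (intro sum.cong refl) (simp add: mult.assoc)
    also have "\<dots> \<le> L2_set (\<lambda>k. \<bar>col U k \<bullet> e\<bar> * sqrt (a k)) {..<n} * L2_set (\<lambda>k. sqrt (a k)) {..<n}"
      by (rule sum_mult_le_L2_set)
    finally have "S\<^sup>2 \<le> (L2_set (\<lambda>k. \<bar>col U k \<bullet> e\<bar> * sqrt (a k)) {..<n} * L2_set (\<lambda>k. sqrt (a k)) {..<n})\<^sup>2"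
      using S0 by (rule power_mono)
    thus ?thesis using a0 by (simp add: L2_set_def power_mult_distrib sum_nonneg)
  qed
  finally show ?thesis unfolding a_def z_def .
qed

lemma nuclear_norm_avg_coords_le:
  fixes A Ab U :: "real mat"
  assumes A: "A \<in> carrier_mat d n" and Ab: "Ab \<in> carrier_mat d n" and ij: "i < n" "j < n" "i \<noteq> j"
    and avg: "\<And>q. q \<in> carrier_vec n \<Longrightarrow> Ab *\<^sub>v q = A *\<^sub>v avg_coords i j q"
    and U: "U \<in> carrier_mat n n" "transpose_mat U * U = 1\<^sub>m n" "U * transpose_mat U = 1\<^sub>m n"
  shows "nuclear_norm Ab \<le> (\<Sum>k<n. (1 - (col U k $ i - col U k $ j)\<^sup>2 / 4) * vec_norm (A *\<^sub>v col U k))"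
proof -
  obtain V w where V: "V \<in> carrier_mat n n" "transpose_mat V * V = 1\<^sub>m n" "V * transpose_mat V = 1\<^sub>m n"
    and w: "\<And>m. m < n \<Longrightarrow> w m \<in> carrier_vec d" "\<And>m. m < n \<Longrightarrow> w m \<bullet> w m \<le> 1"
    and bessel: "\<And>z. z \<in> carrier_vec d \<Longrightarrow> (\<Sum>m<n. (z \<bullet> w m)\<^sup>2) \<le> z \<bullet> z"
    and nn: "nuclear_norm Ab = (\<Sum>m<n. (Ab *\<^sub>v col V m) \<bullet> w m)"
    by (rule nuclear_norm_attained[OF Ab]) blast
  have u: "col U k \<in> carrier_vec n" and v: "col V k \<in> carrier_vec n" if "k < n" for k
    using U V that by auto
  have "nuclear_norm Ab = (\<Sum>m<n. (A *\<^sub>v avg_coords i j (col V m)) \<bullet> w m)"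
    unfolding nn using v by (intro sum.cong refl) (simp add: avg)
  also have "\<dots> \<le> (\<Sum>k<n. sqrt (\<Sum>m<n. (col U k \<bullet> avg_coords i j (col V m))\<^sup>2) * vec_norm (A *\<^sub>v col U k))"
    by (rule sum_scalar_prod_le_sum_vec_norm[OF A U(1,3)]) (use v w bessel ij in auto)
  also have "\<dots> \<le> (\<Sum>k<n. (1 - (col U k $ i - col U k $ j)\<^sup>2 / 4) * vec_norm (A *\<^sub>v col U k))"
  proof (intro sum_mono mult_right_mono)
    fix k assume "k \<in> {..<n}"
    hence k: "k < n" by simp
    have "(\<Sum>m<n. (col U k \<bullet> avg_coords i j (col V m))\<^sup>2) = (\<Sum>m<n. (col V m \<bullet> avg_coords i j (col U k))\<^sup>2)"
      using avg_coords_sym[OF ij] u[OF k] v by simp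
    also have "\<dots> = avg_coords i j (col U k) \<bullet> avg_coords i j (col U k)"
      by (rule sum_sq_scalar_prod_orthogonal_cols[OF V(1,3)]) (use u[OF k] ij in simp)
    also have "\<dots> = 1 - (col U k $ i - col U k $ j)\<^sup>2 / 2"
      using scalar_prod_self_avg_coords[OF ij u[OF k]] orthogonal_col_norm[OF U(1,2) k] by simp
    finally have eq: "(\<Sum>m<n. (col U k \<bullet> avg_coords i j (col V m))\<^sup>2) = 1 - (col U k $ i - col U k $ j)\<^sup>2 / 2" .
    moreover have "(col U k $ i - col U k $ j)\<^sup>2 \<le> 2"
      using eq sum_nonneg[of "{..<n}" "\<lambda>m. (col U k \<bullet> avg_coords i j (col V m))\<^sup>2"] by simp
    ultimately show "sqrt (\<Sum>m<n. (col U k \<bullet> avg_coords i j (col V m))\<^sup>2) \<le> 1 - (col U k $ i - col U k $ j)\<^sup>2 / 4"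
      by (simp add: sqrt_one_minus_half_le)
  qed simp
  finally show ?thesis .
qed

lemma nuclear_norm_avg_coords_gap:
  fixes A Ab :: "real mat"
  assumes A: "A \<in> carrier_mat d n" and Ab: "Ab \<in> carrier_mat d n" and ij: "i < n" "j < n" "i \<noteq> j"
    and avg: "\<And>q. q \<in> carrier_vec n \<Longrightarrow> Ab *\<^sub>v q = A *\<^sub>v avg_coords i j q"
  shows "(A *\<^sub>v (unit_vec n i - unit_vec n j)) \<bullet> (A *\<^sub>v (unit_vec n i - unit_vec n j))
     \<le> 4 * (nuclear_norm A - nuclear_norm Ab) * nuclear_norm A"
proof -
  obtain U where U: "U \<in> carrier_mat n n" "transpose_mat U * U = 1\<^sub>m n" "U * transpose_mat U = 1\<^sub>m n"
    and nn: "nuclear_norm A = (\<Sum>k<n. vec_norm (A *\<^sub>v col U k))"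
    using nuclear_norm_eq_sum_vec_norm[OF A] by blast
  define e :: "real vec" where "e = unit_vec n i - unit_vec n j"
  have e: "e \<in> carrier_vec n" unfolding e_def by simp
  have ue: "col U k \<bullet> e = col U k $ i - col U k $ j" if "k < n" for k
    unfolding e_def using U that ij by (subst scalar_prod_minus_distrib[of _ n]) auto
  have "nuclear_norm Ab \<le> nuclear_norm A - (\<Sum>k<n. (col U k \<bullet> e)\<^sup>2 * vec_norm (A *\<^sub>v col U k)) / 4"
    using nuclear_norm_avg_coords_le[OF A Ab ij avg U] unfolding nn
    by (simp add: ue algebra_simps sum_subtractf sum_divide_distrib)
  hence "(\<Sum>k<n. (col U k \<bullet> e)\<^sup>2 * vec_norm (A *\<^sub>v col U k)) * nuclear_norm A
      \<le> 4 * (nuclear_norm A - nuclear_norm Ab) * nuclear_norm A"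
    using nuclear_norm_nonneg[OF A] by (intro mult_right_mono) auto
  moreover have "(A *\<^sub>v e) \<bullet> (A *\<^sub>v e) \<le> (\<Sum>k<n. (col U k \<bullet> e)\<^sup>2 * vec_norm (A *\<^sub>v col U k)) * nuclear_norm A"
    unfolding nn by (rule sq_vec_norm_mult_vec_le[OF A U(1,3) e])
  ultimately show ?thesis unfolding e_def by linarith
qed

lemma Diag_carrier [simp]: "w \<in> carrier_vec n \<Longrightarrow> Diag w \<in> carrier_mat n n"
  unfolding Diag_def by auto

lemma Diag_mult_vec:
  assumes w: "w \<in> carrier_vec n" and q: "q \<in> carrier_vec n"
  shows "Diag w *\<^sub>v q = vec n (\<lambda>l. w $ l * q $ l)"
proof (rule eq_vecI)
  fix l assume "l < dim_vec (vec n (\<lambda>l. w $ l * q $ l))"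
  hence l: "l < n" by simp
  have "(Diag w *\<^sub>v q) $ l = (\<Sum>k<n. (if l = k then w $ l else 0) * q $ k)"
    using w q l by (simp add: Diag_def scalar_prod_eq_sum[of _ n])
  also have "\<dots> = (\<Sum>k<n. if k = l then w $ l * q $ l else 0)" by (intro sum.cong) auto
  finally show "(Diag w *\<^sub>v q) $ l = vec n (\<lambda>l. w $ l * q $ l) $ l" using l by simp
qed (use w in \<open>simp add: Diag_def\<close>)

lemma mult_Diag_mult_vec:
  "(X :: real mat) \<in> carrier_mat d n \<Longrightarrow> w \<in> carrier_vec n \<Longrightarrow> q \<in> carrier_vec n \<Longrightarrow>
   (X * Diag w) *\<^sub>v q = X *\<^sub>v vec n (\<lambda>l. w $ l * q $ l)"
  using assoc_mult_mat_vec[of X d n "Diag w" n q] by (simp add: Diag_mult_vec)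

lemma col_mult_Diag:
  assumes X: "(X :: real mat) \<in> carrier_mat d n" and w: "w \<in> carrier_vec n" and l: "l < n"
  shows "col (X * Diag w) l = w $ l \<cdot>\<^sub>v col X l"
proof -
  have "vec n (\<lambda>k. w $ k * unit_vec n l $ k) = w $ l \<cdot>\<^sub>v unit_vec n l"
    by (rule eq_vecI) (auto simp: unit_vec_def)
  thus ?thesis
    using mult_Diag_mult_vec[OF X w unit_vec_carrier[of n l]] mult_unit_vec[of "X * Diag w" d n l]
      mult_unit_vec[OF X l] X w l by (simp add: mult_mat_vec)
qed

lemma mult_vec_two_supported:
  fixes X :: "real mat"
  assumes X: "X \<in> carrier_mat d n" and ij: "i < n" "j < n" "i \<noteq> j" and u: "u \<in> carrier_vec n"
    and supp: "\<And>l. l < n \<Longrightarrow> l \<noteq> i \<Longrightarrow> l \<noteq> j \<Longrightarrow> u $ l = 0"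
  shows "X *\<^sub>v u = u $ i \<cdot>\<^sub>v col X i + u $ j \<cdot>\<^sub>v col X j"
proof (rule eq_vecI)
  fix r assume "r < dim_vec (u $ i \<cdot>\<^sub>v col X i + u $ j \<cdot>\<^sub>v col X j)"
  hence r: "r < d" using X by simp
  have "(X *\<^sub>v u) $ r = (\<Sum>l<n. X $$ (r,l) * u $ l)"
    using X u r by (simp add: scalar_prod_eq_sum[of _ n])
  also have "\<dots> = (\<Sum>l<n. (if l = i then X $$ (r,i) * u $ i else 0) + (if l = j then X $$ (r,j) * u $ j else 0))"
    by (intro sum.cong refl) (use supp ij in auto)
  finally show "(X *\<^sub>v u) $ r = (u $ i \<cdot>\<^sub>v col X i + u $ j \<cdot>\<^sub>v col X j) $ r"
    using X r ij by (simp add: sum.distrib mult.commute)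
qed (use X in simp)

lemma mult_Diag_avg_coords:
  fixes X :: "real mat"
  assumes X: "X \<in> carrier_mat d n" and ij: "i < n" "j < n" "i \<noteq> j" and eq: "col X i = col X j"
    and w: "w \<in> carrier_vec n" and q: "q \<in> carrier_vec n"
  shows "(X * Diag (avg_coords i j w)) *\<^sub>v q = (X * Diag w) *\<^sub>v avg_coords i j q"
proof -
  define a where "a = vec n (\<lambda>l. avg_coords i j w $ l * q $ l)"
  define b where "b = vec n (\<lambda>l. w $ l * avg_coords i j q $ l)"
  have ab: "a \<in> carrier_vec n" "b \<in> carrier_vec n" unfolding a_def b_def by auto
  have "X *\<^sub>v (a - b) = ((a - b) $ i + (a - b) $ j) \<cdot>\<^sub>v col X j"
    using mult_vec_two_supported[OF X ij, of "a - b"] ab ij w q eq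
    by (simp add: a_def b_def index_avg_coords[OF ij] add_smult_distrib_vec)
  also have "(a - b) $ i + (a - b) $ j = 0"
    using ij ab w q by (simp add: a_def b_def index_avg_coords[OF ij] field_simps)
  moreover have "0 \<cdot>\<^sub>v col X j = 0\<^sub>v d" using X ij by (intro eq_vecI) auto
  ultimately have diff: "X *\<^sub>v a - X *\<^sub>v b = 0\<^sub>v d"
    using X ab by (simp add: mult_minus_distrib_mat_vec)
  have "X *\<^sub>v a = X *\<^sub>v b"
  proof (rule eq_vecI)
    fix r assume "r < dim_vec (X *\<^sub>v b)"
    thus "(X *\<^sub>v a) $ r = (X *\<^sub>v b) $ r" using arg_cong[OF diff, of "\<lambda>x. x $ r"] X by simp
  qed (use X in simp)
  thus ?thesis using X ij w q by (simp add: mult_Diag_mult_vec a_def b_def)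
qed

lemma mult_Diag_unit_diff:
  fixes X :: "real mat"
  assumes X: "X \<in> carrier_mat d n" and ij: "i < n" "j < n" "i \<noteq> j" and w: "w \<in> carrier_vec n"
  shows "(X * Diag w) *\<^sub>v (unit_vec n i - unit_vec n j) = w $ i \<cdot>\<^sub>v col X i - w $ j \<cdot>\<^sub>v col X j"
proof -
  have XD: "X * Diag w \<in> carrier_mat d n" using X w by simp
  have "(X * Diag w) *\<^sub>v (unit_vec n i - unit_vec n j) = (X * Diag w) *\<^sub>v unit_vec n i - (X * Diag w) *\<^sub>v unit_vec n j"
    by (rule mult_minus_distrib_mat_vec[OF XD]) auto
  also have "\<dots> = col (X * Diag w) i - col (X * Diag w) j" using ij by (simp add: mult_unit_vec[OF XD])
  also have "\<dots> = w $ i \<cdot>\<^sub>v col X i - w $ j \<cdot>\<^sub>v col X j" using ij by (simp add: col_mult_Diag[OF X w])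
  finally show ?thesis .
qed

lemma vec_norm_minus_commute: "u \<in> carrier_vec d \<Longrightarrow> v \<in> carrier_vec d \<Longrightarrow> vec_norm (u - v) = vec_norm (v - u)"
  by (simp add: scalar_prod_eq_sum[of _ d] power2_eq_square[symmetric] power2_commute)

lemma trace_lasso_obj_zero:
  "(X :: real mat) \<in> carrier_mat d n \<Longrightarrow> y \<in> carrier_vec d \<Longrightarrow> trace_lasso_obj y lam X (0\<^sub>v n) = y \<bullet> y / 2"
proof -
  assume X: "X \<in> carrier_mat d n" and y: "y \<in> carrier_vec d"
  have "X * Diag (0\<^sub>v n) = 0\<^sub>m d n" using X by (intro eq_matI) (auto simp: Diag_def scalar_prod_def)
  moreover have "y - X *\<^sub>v 0\<^sub>v n = y" using X y by (intro eq_vecI) auto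
  ultimately show ?thesis unfolding trace_lasso_obj_def by (simp add: nuclear_norm_zero_mat)
qed

context
  fixes d n :: nat and y w :: "real vec" and lam :: real and X :: "real mat"
  assumes y: "y \<in> carrier_vec d" and lam: "lam > 0" and X: "X \<in> carrier_mat d n"
    and w: "w \<in> carrier_vec n"
    and minimizer: "\<And>v. v \<in> carrier_vec n \<Longrightarrow> trace_lasso_obj y lam X w \<le> trace_lasso_obj y lam X v"
begin

lemma trace_lasso_minimizer_bounds:
  "(y - X *\<^sub>v w) \<bullet> (y - X *\<^sub>v w) \<le> y \<bullet> y" "lam * nuclear_norm (X * Diag w) \<le> y \<bullet> y / 2"
proof -
  have "trace_lasso_obj y lam X w \<le> y \<bullet> y / 2"
    using minimizer[of "0\<^sub>v n"] trace_lasso_obj_zero[OF X y] by simp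
  moreover have "0 \<le> lam * nuclear_norm (X * Diag w)"
    using lam nuclear_norm_nonneg[of "X * Diag w" d n] X w by simp
  ultimately show "(y - X *\<^sub>v w) \<bullet> (y - X *\<^sub>v w) \<le> y \<bullet> y" "lam * nuclear_norm (X * Diag w) \<le> y \<bullet> y / 2"
    unfolding trace_lasso_obj_def using scalar_prod_self_nonneg[of "y - X *\<^sub>v w"] by linarith+
qed

lemma trace_lasso_minimizer_coord_bound:
  assumes l: "l < n" shows "\<bar>w $ l\<bar> * vec_norm (col X l) \<le> y \<bullet> y / (2 * lam)"
proof -
  have "\<bar>w $ l\<bar> * vec_norm (col X l) = vec_norm (col (X * Diag w) l)"
    unfolding col_mult_Diag[OF X w l] by (rule vec_norm_smult[symmetric])
  also have "\<dots> \<le> nuclear_norm (X * Diag w)"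
    by (rule vec_norm_col_le_nuclear_norm[of _ d n]) (use X w l in auto)
  finally have "\<bar>w $ l\<bar> * vec_norm (col X l) \<le> nuclear_norm (X * Diag w)" .
  hence "lam * (\<bar>w $ l\<bar> * vec_norm (col X l)) \<le> lam * nuclear_norm (X * Diag w)"
    using lam by (simp add: mult_left_mono)
  hence "lam * (\<bar>w $ l\<bar> * vec_norm (col X l)) \<le> y \<bullet> y / 2"
    using trace_lasso_minimizer_bounds(2) by linarith
  thus ?thesis using lam by (simp add: field_simps)
qed

lemma trace_lasso_minimizer_coord_le:
  assumes l: "l < n" and s: "0 < s" "s \<le> vec_norm (col X l)"
  shows "\<bar>w $ l\<bar> \<le> y \<bullet> y / (2 * lam) / s"
proof -
  have "\<bar>w $ l\<bar> * s \<le> y \<bullet> y / (2 * lam)"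
    using mult_left_mono[OF s(2), of "\<bar>w $ l\<bar>"] trace_lasso_minimizer_coord_bound[OF l] by simp
  thus ?thesis by (subst pos_le_divide_eq[OF s(1)])
qed

lemma trace_lasso_minimizer_avg_coords:
  assumes ij: "i < n" "j < n" "i \<noteq> j"
  defines "t \<equiv> (w $ i - w $ j) / 2" and "\<delta> \<equiv> vec_norm (col X i - col X j)"
  shows "lam * (nuclear_norm (X * Diag w) - nuclear_norm (X * Diag (avg_coords i j w)))
    \<le> \<bar>t\<bar> * vec_norm y * \<delta> + t\<^sup>2 / 2 * \<delta>\<^sup>2"
proof -
  define p where "p = y - X *\<^sub>v w"
  define e where "e = col X i - col X j"
  have p: "p \<in> carrier_vec d" and e: "e \<in> carrier_vec d" unfolding p_def e_def using X y w ij by auto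
  have "avg_coords i j w = w - t \<cdot>\<^sub>v (unit_vec n i - unit_vec n j)"
    unfolding avg_coords_def t_def using w by simp
  hence "X *\<^sub>v avg_coords i j w = X *\<^sub>v w - t \<cdot>\<^sub>v e"
    unfolding e_def using X w ij by (simp add: mult_minus_distrib_mat_vec mult_mat_vec mult_unit_vec[OF X])
  hence "y - X *\<^sub>v avg_coords i j w = p + t \<cdot>\<^sub>v e"
    unfolding p_def using X y w e by (intro eq_vecI) auto
  hence "trace_lasso_obj y lam X (avg_coords i j w) - trace_lasso_obj y lam X w
      = t * (p \<bullet> e) + t\<^sup>2 / 2 * (e \<bullet> e) + lam * (nuclear_norm (X * Diag (avg_coords i j w)) - nuclear_norm (X * Diag w))"
    unfolding trace_lasso_obj_def p_def[symmetric] using p e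
    by (simp add: scalar_prod_eq_sum[of _ d] algebra_simps power2_eq_square sum.distrib
        sum_distrib_left sum_divide_distrib)
  moreover have "t * (p \<bullet> e) \<le> \<bar>t\<bar> * (vec_norm y * \<delta>)"
  proof -
    have "\<bar>p \<bullet> e\<bar> \<le> vec_norm p * \<delta>" unfolding \<delta>_def e_def[symmetric] by (rule abs_scalar_prod_le_vec_norm[OF p e])
    also have "\<dots> \<le> vec_norm y * \<delta>"
      using trace_lasso_minimizer_bounds(1) unfolding p_def \<delta>_def by (intro mult_right_mono) auto
    finally show ?thesis by (metis abs_ge_self abs_mult abs_ge_zero mult_left_mono order_trans)
  qed
  moreover have "e \<bullet> e = \<delta>\<^sup>2" unfolding \<delta>_def e_def by simp
  moreover have "trace_lasso_obj y lam X w \<le> trace_lasso_obj y lam X (avg_coords i j w)"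
    using minimizer w ij by simp
  ultimately show ?thesis unfolding right_diff_distrib by (simp add: mult.assoc)
qed

end

lemma nuclear_norm_mult_Diag_col_perturbation:
  fixes A B :: "real mat"
  assumes A: "A \<in> carrier_mat d n" and B: "B \<in> carrier_mat d n" and l: "l < n"
    and cols: "\<And>k. k < n \<Longrightarrow> k \<noteq> l \<Longrightarrow> col B k = col A k" and w: "w \<in> carrier_vec n"
  shows "nuclear_norm (B * Diag w) \<le> nuclear_norm (A * Diag w) + n * (\<bar>w $ l\<bar> * vec_norm (col B l - col A l))"
proof -
  have "col (B * Diag w) l - col (A * Diag w) l = w $ l \<cdot>\<^sub>v (col B l - col A l)"
    using A B w l by (simp add: col_mult_Diag) (intro eq_vecI, auto simp: right_diff_distrib)
  moreover have "nuclear_norm (B * Diag w)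
      \<le> nuclear_norm (A * Diag w) + n * vec_norm (col (B * Diag w) l - col (A * Diag w) l)"
    by (rule nuclear_norm_le_col_perturbation[of _ d n]) (use A B w l cols in \<open>auto simp: col_mult_Diag\<close>)
  ultimately show ?thesis by (metis vec_norm_smult)
qed

lemma grouping_gap_equal_cols:
  fixes X :: "real mat"
  assumes X: "X \<in> carrier_mat d n" and ij: "i < n" "j < n" "i \<noteq> j" and eq: "col X i = col X j"
    and w: "w \<in> carrier_vec n"
  shows "(w $ i - w $ j)\<^sup>2 * (col X j \<bullet> col X j)
    \<le> 4 * (nuclear_norm (X * Diag w) - nuclear_norm (X * Diag (avg_coords i j w))) * nuclear_norm (X * Diag w)"
proof -
  have Ae: "(X * Diag w) *\<^sub>v (unit_vec n i - unit_vec n j) = (w $ i - w $ j) \<cdot>\<^sub>v col X j"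
    using mult_Diag_unit_diff[OF X ij w] X ij eq by simp (intro eq_vecI, auto simp: left_diff_distrib)
  have sq: "((w $ i - w $ j) \<cdot>\<^sub>v col X j) \<bullet> ((w $ i - w $ j) \<cdot>\<^sub>v col X j) = (w $ i - w $ j)\<^sup>2 * (col X j \<bullet> col X j)"
    by (simp add: scalar_prod_def sum_distrib_left power2_eq_square mult_ac)
  have "(X * Diag w *\<^sub>v (unit_vec n i - unit_vec n j)) \<bullet> (X * Diag w *\<^sub>v (unit_vec n i - unit_vec n j))
    \<le> 4 * (nuclear_norm (X * Diag w) - nuclear_norm (X * Diag (avg_coords i j w))) * nuclear_norm (X * Diag w)"
    by (rule nuclear_norm_avg_coords_gap[of _ d n _ i j]) (use X w ij mult_Diag_avg_coords[OF X ij eq w] in auto)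
  thus ?thesis unfolding Ae sq .
qed

lemma trace_lasso_grouping_estimate:
  fixes Z Xp :: "real mat" and y w :: "real vec"
  assumes Z: "Z \<in> carrier_mat d n" and Xp: "Xp \<in> carrier_mat d n" and y: "y \<in> carrier_vec d"
    and lam: "lam > 0" and ij: "i < n" "j < n" "i \<noteq> j" and eq: "col Xp i = col Xp j"
    and cols: "\<And>l. l < n \<Longrightarrow> l \<noteq> i \<Longrightarrow> col Z l = col Xp l"
    and w: "w \<in> carrier_vec n"
    and minimizer: "\<And>v. v \<in> carrier_vec n \<Longrightarrow> trace_lasso_obj y lam Z w \<le> trace_lasso_obj y lam Z v"
    and C: "\<bar>w $ i\<bar> \<le> C" "\<bar>w $ j\<bar> \<le> C"
  defines "\<delta> \<equiv> vec_norm (col Z i - col Xp i)"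
  shows "(w $ i - w $ j)\<^sup>2 * (col Xp j \<bullet> col Xp j) \<le>
    4 * ((C * vec_norm y * \<delta> + C\<^sup>2 / 2 * \<delta>\<^sup>2) / lam + 2 * real n * C * \<delta>) * (y \<bullet> y / (2 * lam) + n * C * \<delta>)"
proof -
  define wb where "wb = avg_coords i j w"
  define t where "t = (w $ i - w $ j) / 2"
  have wb: "wb \<in> carrier_vec n" unfolding wb_def using w ij by simp
  have \<delta>0: "0 \<le> \<delta>" unfolding \<delta>_def by simp
  have "\<bar>wb $ i\<bar> \<le> C" "\<bar>t\<bar> \<le> C" "0 \<le> C"
    unfolding wb_def t_def using index_avg_coords[OF ij w ij(1)] C by (auto simp: abs_le_iff)
  hence C0: "0 \<le> C" and Cwb: "n * (\<bar>wb $ i\<bar> * \<delta>) \<le> n * (C * \<delta>)" and Cwi: "n * (\<bar>w $ i\<bar> * \<delta>) \<le> n * (C * \<delta>)"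
    and Ct: "\<bar>t\<bar> * vec_norm y * \<delta> + t\<^sup>2 / 2 * \<delta>\<^sup>2 \<le> C * vec_norm y * \<delta> + C\<^sup>2 / 2 * \<delta>\<^sup>2"
    using C abs_le_square_iff[of t C] \<delta>0
    by (auto intro!: add_mono mult_left_mono mult_right_mono divide_right_mono)
  have "nuclear_norm (Xp * Diag w) \<le> nuclear_norm (Z * Diag w) + n * (\<bar>w $ i\<bar> * \<delta>)"
    using nuclear_norm_mult_Diag_col_perturbation[OF Z Xp ij(1) _ w] cols Z Xp ij
      vec_norm_minus_commute[of "col Xp i" d "col Z i"] unfolding \<delta>_def by auto
  moreover have "nuclear_norm (Z * Diag wb) \<le> nuclear_norm (Xp * Diag wb) + n * (\<bar>wb $ i\<bar> * \<delta>)"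
    using nuclear_norm_mult_Diag_col_perturbation[OF Xp Z ij(1) cols wb] unfolding \<delta>_def .
  moreover have "lam * (nuclear_norm (Z * Diag w) - nuclear_norm (Z * Diag wb)) \<le> \<bar>t\<bar> * vec_norm y * \<delta> + t\<^sup>2 / 2 * \<delta>\<^sup>2"
    using trace_lasso_minimizer_avg_coords[OF y lam Z w minimizer ij] cols[OF ij(2) ij(3)[symmetric]] eq
    unfolding wb_def t_def \<delta>_def by simp
  hence "nuclear_norm (Z * Diag w) - nuclear_norm (Z * Diag wb) \<le> (C * vec_norm y * \<delta> + C\<^sup>2 / 2 * \<delta>\<^sup>2) / lam"
    using Ct lam by (simp add: pos_le_divide_eq mult.commute)
  moreover have "nuclear_norm (Z * Diag w) \<le> y \<bullet> y / (2 * lam)"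
    using trace_lasso_minimizer_bounds(2)[OF y lam Z w minimizer] lam by (simp add: field_simps)
  ultimately have gap_bound: "nuclear_norm (Xp * Diag w) - nuclear_norm (Xp * Diag wb)
      \<le> (C * vec_norm y * \<delta> + C\<^sup>2 / 2 * \<delta>\<^sup>2) / lam + 2 * real n * C * \<delta>"
    and norm_bound: "nuclear_norm (Xp * Diag w) \<le> y \<bullet> y / (2 * lam) + n * C * \<delta>"
    using Cwb Cwi by (simp_all add: algebra_simps)
  have "(w $ i - w $ j)\<^sup>2 * (col Xp j \<bullet> col Xp j)
      \<le> 4 * (nuclear_norm (Xp * Diag w) - nuclear_norm (Xp * Diag wb)) * nuclear_norm (Xp * Diag w)"
    unfolding wb_def by (rule grouping_gap_equal_cols[OF Xp ij eq w])
  also have "\<dots> \<le> 4 * ((C * vec_norm y * \<delta> + C\<^sup>2 / 2 * \<delta>\<^sup>2) / lam + 2 * real n * C * \<delta>) * nuclear_norm (Xp * Diag w)"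
    using nuclear_norm_nonneg[of "Xp * Diag w" d n] Xp w mult_left_mono[OF gap_bound, of 4]
    by (intro mult_right_mono) auto
  also have "\<dots> \<le> 4 * ((C * vec_norm y * \<delta> + C\<^sup>2 / 2 * \<delta>\<^sup>2) / lam + 2 * real n * C * \<delta>) * (y \<bullet> y / (2 * lam) + n * C * \<delta>)"
    using norm_bound C0 \<delta>0 lam by (intro mult_left_mono) auto
  finally show ?thesis .
qed

lemma trace_lasso_unique_minimizer_col_nonzero:
  fixes X :: "real mat"
  assumes X: "X \<in> carrier_mat d n" and w: "w \<in> carrier_vec n" and l: "l < n"
    and unique: "\<And>v. v \<in> carrier_vec n \<Longrightarrow> v \<noteq> w \<Longrightarrow> trace_lasso_obj y lam X w < trace_lasso_obj y lam X v"
  shows "col X l \<noteq> 0\<^sub>v d"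
proof
  assume zero: "col X l = 0\<^sub>v d"
  define v where "v = w + unit_vec n l"
  have v: "v \<in> carrier_vec n" and "v \<noteq> w" unfolding v_def using w l by (auto dest: arg_cong[of _ _ "\<lambda>u. u $ l"])
  text \<open>Moving along a zero column of \<open>X\<close> changes neither term of the objective.\<close>
  have "X *\<^sub>v v = X *\<^sub>v w" unfolding v_def using X w l zero by (simp add: mult_add_distrib_mat_vec mult_unit_vec)
  moreover have "col (X * Diag v) k = col (X * Diag w) k" if "k < n" for k
    using that X w v l zero by (cases "k = l") (auto simp: col_mult_Diag v_def)
  hence "X * Diag v = X * Diag w" by (intro mat_col_eqI) (use X w v in \<open>auto simp: Diag_def\<close>)
  ultimately have "trace_lasso_obj y lam X v = trace_lasso_obj y lam X w" unfolding trace_lasso_obj_def by simp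
  thus False using unique[OF v \<open>v \<noteq> w\<close>] by simp
qed

lemma tendsto_vec_norm_diff:
  fixes u :: "real vec" and v :: "nat \<Rightarrow> real vec"
  assumes v: "\<And>k. v k \<in> carrier_vec d" and u: "u \<in> carrier_vec d"
    and lim: "\<And>r. r < d \<Longrightarrow> (\<lambda>k. v k $ r) \<longlonglongrightarrow> u $ r"
  shows "(\<lambda>k. vec_norm (v k - u)) \<longlonglongrightarrow> 0" and "(\<lambda>k. v k \<bullet> v k) \<longlonglongrightarrow> u \<bullet> u"
proof -
  have "(\<lambda>k. \<Sum>r<d. (v k $ r - u $ r) * (v k $ r - u $ r)) \<longlonglongrightarrow> (\<Sum>r<d. (u $ r - u $ r) * (u $ r - u $ r))"
    by (intro tendsto_intros lim) auto
  hence "(\<lambda>k. vec_norm (v k - u)) \<longlonglongrightarrow> sqrt 0"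
    using v u by (intro tendsto_real_sqrt) (simp add: scalar_prod_eq_sum[of _ d])
  thus "(\<lambda>k. vec_norm (v k - u)) \<longlonglongrightarrow> 0" by simp
  have "(\<lambda>k. \<Sum>r<d. v k $ r * v k $ r) \<longlonglongrightarrow> (\<Sum>r<d. u $ r * u $ r)" by (intro tendsto_intros lim) auto
  thus "(\<lambda>k. v k \<bullet> v k) \<longlonglongrightarrow> u \<bullet> u" using v u by (simp add: scalar_prod_eq_sum[of _ d])
qed

theorem theorem3:
  fixes d n i j :: nat and y :: "real vec" and lam :: real and X :: "real mat"
    and Xs :: "nat \<Rightarrow> real mat" and ws :: "nat \<Rightarrow> real vec"
  assumes "y \<in> carrier_vec d" and "lam > 0" and "X \<in> carrier_mat d n"
    and "i < n" and "j < n"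
    and "\<And>k. Xs k \<in> carrier_mat d n"
    and "\<And>k l. l < n \<Longrightarrow> l \<noteq> i \<Longrightarrow> col (Xs k) l = col X l"
    and "\<And>r. r < d \<Longrightarrow> (\<lambda>k. Xs k $$ (r, i)) \<longlonglongrightarrow> X $$ (r, j)"
    and "\<And>k. ws k \<in> carrier_vec n"
    and "\<And>k v. v \<in> carrier_vec n \<Longrightarrow> v \<noteq> ws k \<Longrightarrow>
            trace_lasso_obj y lam (Xs k) (ws k) < trace_lasso_obj y lam (Xs k) v"
  shows "(\<lambda>k. ws k $ i - ws k $ j) \<longlonglongrightarrow> 0"
proof (cases "i = j")
  case False
  note y = assms(1) and lam = assms(2) and X = assms(3) and ij = assms(4,5) False
    and Xs = assms(6) and cols = assms(7) and lim = assms(8) and ws = assms(9) and unique = assms(10)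
  have minimizer: "trace_lasso_obj y lam (Xs k) (ws k) \<le> trace_lasso_obj y lam (Xs k) v"
    if "v \<in> carrier_vec n" for k v using unique[of v k] that by (cases "v = ws k") auto
  define x where "x = col X j"
  have x: "x \<in> carrier_vec d" and colj: "\<And>k. col (Xs k) j = x" unfolding x_def using X ij cols by auto
  have "x \<noteq> 0\<^sub>v d" using trace_lasso_unique_minimizer_col_nonzero[OF Xs ws ij(2) unique] colj by metis
  hence c: "0 < x \<bullet> x" using x scalar_prod_self_eq_0_iff[OF x] scalar_prod_self_nonneg[of x] by linarith
  define Xp where "Xp = mat d n (\<lambda>(r, l). X $$ (r, if l = i then j else l))"
  have Xp: "Xp \<in> carrier_mat d n" and colXp: "\<And>l. l < n \<Longrightarrow> col Xp l = col X (if l = i then j else l)"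
    unfolding Xp_def using X ij by (auto intro!: eq_vecI)
  define \<delta> where "\<delta> k = vec_norm (col (Xs k) i - x)" for k
  have "(\<lambda>k. col (Xs k) i $ r) \<longlonglongrightarrow> x $ r" if "r < d" for r
  proof -
    have "col (Xs k) i $ r = Xs k $$ (r, i)" for k using Xs[of k] ij that by simp
    thus ?thesis using lim[OF that] X ij that unfolding x_def by simp
  qed
  hence "\<delta> \<longlonglongrightarrow> 0" and "(\<lambda>k. col (Xs k) i \<bullet> col (Xs k) i) \<longlonglongrightarrow> x \<bullet> x"
    using tendsto_vec_norm_diff[of "\<lambda>k. col (Xs k) i" d x] Xs x ij unfolding \<delta>_def by auto
  hence "eventually (\<lambda>k. x \<bullet> x / 2 < col (Xs k) i \<bullet> col (Xs k) i) sequentially"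
    using c by (intro order_tendstoD) auto
  define C where "C = y \<bullet> y / (2 * lam) / sqrt (x \<bullet> x / 2)"
  define B where "B k = 4 * ((C * vec_norm y * \<delta> k + C\<^sup>2 / 2 * (\<delta> k)\<^sup>2) / lam + 2 * real n * C * \<delta> k)
    * (y \<bullet> y / (2 * lam) + n * C * \<delta> k) / (x \<bullet> x)" for k
  have bound: "eventually (\<lambda>k. (ws k $ i - ws k $ j)\<^sup>2 \<le> B k) sequentially"
  proof (rule eventually_mono[OF \<open>eventually _ sequentially\<close>])
    fix k assume "x \<bullet> x / 2 < col (Xs k) i \<bullet> col (Xs k) i"
    hence "\<bar>ws k $ l\<bar> \<le> C" if "l = i \<or> l = j" for l
      using trace_lasso_minimizer_coord_le[OF y lam Xs ws minimizer, of l "sqrt (x \<bullet> x / 2)"] that c ij colj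
      unfolding C_def by auto
    thus "(ws k $ i - ws k $ j)\<^sup>2 \<le> B k"
      using trace_lasso_grouping_estimate[OF Xs Xp y lam ij _ _ ws minimizer, where C = C] c colXp cols ij
      unfolding B_def \<delta>_def x_def by (simp add: pos_le_divide_eq)
  qed
  have "B \<longlonglongrightarrow> 4 * ((C * vec_norm y * 0 + C\<^sup>2 / 2 * 0\<^sup>2) / lam + 2 * real n * C * 0)
      * (y \<bullet> y / (2 * lam) + n * C * 0) / (x \<bullet> x)"
    unfolding B_def by (intro tendsto_intros \<open>\<delta> \<longlonglongrightarrow> 0\<close>) (use lam c in auto)
  hence "B \<longlonglongrightarrow> 0" by simp
  moreover have "eventually (\<lambda>k. norm ((ws k $ i - ws k $ j)\<^sup>2) \<le> norm (B k) * 1) sequentially"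
    using bound by eventually_elim simp
  ultimately have "(\<lambda>k. (ws k $ i - ws k $ j)\<^sup>2) \<longlonglongrightarrow> 0" by (rule tendsto_0_le)
  thus ?thesis by simp
qed simp

end
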